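(* Let $k\ge1$ be an integer, $r>0$, $\alpha,\beta>0$, and let $(X,\rho)$ be a finite semimetric space with the counting measure $\mu(A)=|A|$ such that $$T_{k+1}(X)\le \frac{\beta|X|^{k+1}}{(k+1)!}\qquad\text{and}\qquad T_k(X)\ge \frac{\alpha|X|^k}{k!}.$$ Let $X=\bigsqcup_{i=1}^n Z_i$ be any greedy cluster partition of $X$ with associated sets $X_i\subseteq Z_i$, and let $I_1=\{i\in\{1,\dots,n\}: (k+1)|X_i|\le |Z_i|\}$. Then $$\sum_{i\in I_1}|Z_i|\le \frac{(k+1)\beta}{\alpha}|X|.$$
   Context: A finite semimetric space $(X,\rho)$: $\rho$ is a nonnegative symmetric function on $X\times X$ with $\rho(x,x)=0$ satisfying the triangle inequality, where distinct points may be at distance $0$. A $2r$-cluster is a subset of diameter at most $2r$. For $x\in X$ and nonempty $A\subseteq X$, $\rho(x,A)=\min_{a\in A}\rho(x,a)$. For an integer $m\ge1$, $T_m(X)=\frac{1}{m!}\,\#\{(x_1,\dots,x_m)\in X^m:\rho(x_i,x_j)>r \text{ for all } 1\le i<j\le m\}$. Greedy cluster partition: let $X_1$ be a $2r$-cluster of maximal cardinality in $X$ (any one, if several) and $Z_1=\{x\in X:\rho(x,X_1)<r\}$. Given pairwise disjoint $Z_1,\dots,Z_m$ with $R_m=X\setminus\bigcup_{i\le m}Z_i\neq\emptyset$, let $X_{m+1}$ be a $2r$-cluster of maximal cardinality among subsets of $R_m$, and $Z_{m+1}=\{x\in R_m:\rho(x,X_{m+1})<r\}$. The procedure stops when the $Z_i$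 cover $X$, giving $X=\bigsqcup_{i=1}^n Z_i$. *)

theory Defs
  imports Complex_Main
begin

definition semimetric_on :: "'a set \<Rightarrow> ('a \<Rightarrow> 'a \<Rightarrow> real) \<Rightarrow> bool" where
  "semimetric_on X rho \<longleftrightarrow>
     (\<forall>x\<in>X. \<forall>y\<in>X. rho x y \<ge> 0 \<and> rho x y = rho y x) \<and>
     (\<forall>x\<in>X. rho x x = 0) \<and>
     (\<forall>x\<in>X. \<forall>y\<in>X. \<forall>z\<in>X. rho x z \<le> rho x y + rho y z)"

definition cluster_in :: "('a \<Rightarrow> 'a \<Rightarrow> real) \<Rightarrow> real \<Rightarrow> 'a set \<Rightarrow> 'a set \<Rightarrow> bool" where
  "cluster_in rho r S A \<longleftrightarrow> A \<subseteq> S \<and> (\<forall>a\<in>A. \<forall>b\<in>A. rho a b \<le> 2 * r)"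

definition max_cluster_in :: "('a \<Rightarrow> 'a \<Rightarrow> real) \<Rightarrow> real \<Rightarrow> 'a set \<Rightarrow> 'a set \<Rightarrow> bool" where
  "max_cluster_in rho r S A \<longleftrightarrow> cluster_in rho r S A \<and>
     (\<forall>B. cluster_in rho r S B \<longrightarrow> card B \<le> card A)"

definition set_dist :: "('a \<Rightarrow> 'a \<Rightarrow> real) \<Rightarrow> 'a \<Rightarrow> 'a set \<Rightarrow> real" where
  "set_dist rho x A = Min ((\<lambda>a. rho x a) ` A)"

definition T_count :: "'a set \<Rightarrow> ('a \<Rightarrow> 'a \<Rightarrow> real) \<Rightarrow> real \<Rightarrow> nat \<Rightarrow> real" where
  "T_count X rho r m = real (card {xs. length xs = m \<and> set xs \<subseteq> X \<and>
       (\<forall>i<m. \<forall>j<m. i < j \<longrightarrow> rho (xs ! i) (xs ! j) > r)}) / fact m"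

definition greedy_cluster_partition ::
  "'a set \<Rightarrow> ('a \<Rightarrow> 'a \<Rightarrow> real) \<Rightarrow> real \<Rightarrow> nat \<Rightarrow> (nat \<Rightarrow> 'a set) \<Rightarrow> (nat \<Rightarrow> 'a set) \<Rightarrow> bool" where
  "greedy_cluster_partition X rho r n Xs Zs \<longleftrightarrow>
     (\<forall>i\<in>{1..n}.
        (let R = X - (\<Union>j\<in>{1..<i}. Zs j) in
           R \<noteq> {} \<and> max_cluster_in rho r R (Xs i) \<and>
           Zs i = {x\<in>R. set_dist rho x (Xs i) < r})) \<and>
     X = (\<Union>i\<in>{1..n}. Zs i)"

end

theory Submission
  imports Defs
begin

text \<open>Fix a separated k-tuple. A ball of radius r about any point has diameter at most 2r,
  so inside Z_i it is a cluster of the remainder from which X_i was chosen and has at most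
  |X_i| points. Hence the k balls about the tuple cover at most k|X_i| \<le> k|Z_i|/(k+1) points
  of Z_i for i \<in> I_1, and at least |Z_i|/(k+1) points of Z_i are farther than r from every
  entry; each of them extends the tuple to a separated (k+1)-tuple. Double counting gives
  T_k(X) k! \<cdot> \<Sum>_{I_1}|Z_i| \<le> (k+1) T_{k+1}(X) (k+1)!, and the hypotheses on T_k, T_{k+1}
  turn this into the claim.\<close>

definition separated_tuples :: "'a set \<Rightarrow> ('a \<Rightarrow> 'a \<Rightarrow> real) \<Rightarrow> real \<Rightarrow> nat \<Rightarrow> 'a list set" where
  "separated_tuples X rho r m = {xs. length xs = m \<and> set xs \<subseteq> X \<and>
       (\<forall>i<m. \<forall>j<m. i < j \<longrightarrow> rho (xs ! i) (xs ! j) > r)}"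

definition far_points :: "'a set \<Rightarrow> ('a \<Rightarrow> 'a \<Rightarrow> real) \<Rightarrow> real \<Rightarrow> 'a list \<Rightarrow> 'a set" where
  "far_points F rho r xs = {z\<in>F. \<forall>x\<in>set xs. r < rho x z}"

lemma T_count_eq_card_separated_tuples:
  "T_count X rho r m = real (card (separated_tuples X rho r m)) / fact m"
  by (simp add: T_count_def separated_tuples_def)

lemma finite_separated_tuples:
  assumes "finite X"
  shows "finite (separated_tuples X rho r m)"
proof (rule finite_subset)
  show "separated_tuples X rho r m \<subseteq> {xs. set xs \<subseteq> X \<and> length xs = m}"
    by (auto simp: separated_tuples_def)
  show "finite {xs. set xs \<subseteq> X \<and> length xs = m}"
    using assms by (rule finite_lists_length_eq)
qed

lemma append_far_point_separated:
  assumes "xs \<in> separated_tuples X rho r m" and "z \<in> far_points X rho r xs"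
  shows "xs @ [z] \<in> separated_tuples X rho r (Suc m)"
proof -
  have len: "length xs = m" using assms(1) by (simp add: separated_tuples_def)
  have "r < rho ((xs @ [z]) ! i) ((xs @ [z]) ! j)" if "i < j" "j < Suc m" for i j
  proof (cases "j = m")
    case True
    with that len have "(xs @ [z]) ! i \<in> set xs" "(xs @ [z]) ! j = z"
      by (simp_all add: nth_append)
    with assms(2) show ?thesis by (simp add: far_points_def)
  next
    case False
    with that assms(1) show ?thesis by (simp add: separated_tuples_def nth_append)
  qed
  with assms len show ?thesis
    by (auto simp: separated_tuples_def far_points_def)
qed

lemma card_Sigma_far_points_le:
  assumes "finite X" and "F \<subseteq> X"
  shows "card (SIGMA xs:separated_tuples X rho r m. far_points F rho r xs)
           \<le> card (separated_tuples X rho r (Suc m))"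
proof (rule card_inj_on_le)
  show "inj_on (\<lambda>(xs, z). xs @ [z]) (SIGMA xs:separated_tuples X rho r m. far_points F rho r xs)"
    by (auto simp: inj_on_def)
  show "(\<lambda>(xs, z). xs @ [z]) ` (SIGMA xs:separated_tuples X rho r m. far_points F rho r xs)
          \<subseteq> separated_tuples X rho r (Suc m)"
    using assms(2) by (auto intro!: append_far_point_separated simp: far_points_def)
  show "finite (separated_tuples X rho r (Suc m))"
    using assms(1) by (rule finite_separated_tuples)
qed

lemma card_separated_tuples_mult_le:
  assumes "finite X" and "F \<subseteq> X"
    and far: "\<And>xs. xs \<in> separated_tuples X rho r m \<Longrightarrow> s \<le> c * card (far_points F rho r xs)"
  shows "card (separated_tuples X rho r m) * s \<le> c * card (separated_tuples X rho r (Suc m))"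
proof -
  have finF: "finite (far_points F rho r xs)" for xs
    using assms(1,2) by (auto simp: far_points_def intro: finite_subset)
  have "card (separated_tuples X rho r m) * s
          \<le> (\<Sum>xs\<in>separated_tuples X rho r m. c * card (far_points F rho r xs))"
    using sum_mono[OF far] by simp
  also have "\<dots> = c * card (SIGMA xs:separated_tuples X rho r m. far_points F rho r xs)"
    using finite_separated_tuples[OF assms(1)] finF
    by (simp add: card_SigmaI sum_distrib_left)
  also have "\<dots> \<le> c * card (separated_tuples X rho r (Suc m))"
    using card_Sigma_far_points_le[OF assms(1,2)] by simp
  finally show ?thesis .
qed

lemma ball_cluster_in:
  assumes "semimetric_on X rho" and "x \<in> X" and "A \<subseteq> S" and "S \<subseteq> X"
  shows "cluster_in rho r S {z\<in>A. rho x z \<le> r}"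
  unfolding cluster_in_def
proof (intro conjI ballI)
  fix a b assume a: "a \<in> {z\<in>A. rho x z \<le> r}" and b: "b \<in> {z\<in>A. rho x z \<le> r}"
  with assms(3,4) have "a \<in> X" "b \<in> X" by auto
  with assms(1,2) have "rho a b \<le> rho x a + rho x b"
    unfolding semimetric_on_def by (metis order_trans order_refl)
  with a b show "rho a b \<le> 2 * r" by simp
qed (use assms(3) in auto)

lemma card_ball_le_max_cluster:
  assumes "semimetric_on X rho" and "x \<in> X" and "A \<subseteq> S" and "S \<subseteq> X"
    and "max_cluster_in rho r S C"
  shows "card {z\<in>A. rho x z \<le> r} \<le> card C"
  using assms(5) ball_cluster_in[OF assms(1-4)] by (simp add: max_cluster_in_def)

lemma card_le_Suc_mult_card_far:
  assumes "finite Z" and "finite P" and "card P \<le> k"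
    and near: "\<And>p. p \<in> P \<Longrightarrow> card {z\<in>Z. near p z} \<le> c"
    and "(k + 1) * c \<le> card Z"
  shows "card Z \<le> (k + 1) * card {z\<in>Z. \<forall>p\<in>P. \<not> near p z}"
proof -
  define far where "far = {z\<in>Z. \<forall>p\<in>P. \<not> near p z}"
  have "Z = far \<union> (\<Union>p\<in>P. {z\<in>Z. near p z})"
    by (auto simp: far_def)
  then have "card Z \<le> card far + card (\<Union>p\<in>P. {z\<in>Z. near p z})"
    using card_Un_le by metis
  also have "card (\<Union>p\<in>P. {z\<in>Z. near p z}) \<le> (\<Sum>p\<in>P. card {z\<in>Z. near p z})"
    using assms(2) by (rule card_UN_le)
  also have "\<dots> \<le> card P * c"
    using sum_bounded_above[of P "\<lambda>p. card {z\<in>Z. near p z}" c] near by simp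
  also have "\<dots> \<le> k * c"
    using assms(3) by simp
  finally have "card Z \<le> card far + k * c"
    by simp
  then have "(k + 1) * card Z \<le> (k + 1) * (card far + k * c)"
    by (rule mult_le_mono2)
  also have "\<dots> = (k + 1) * card far + k * ((k + 1) * c)"
    by (simp add: algebra_simps)
  also have "\<dots> \<le> (k + 1) * card far + k * card Z"
    using assms(5) by simp
  finally show ?thesis
    by (simp add: far_def)
qed

lemma greedy_cluster_partitionD:
  assumes "greedy_cluster_partition X rho r n Xs Zs" and "i \<in> {1..n}"
  shows greedy_Zs_subset_remainder: "Zs i \<subseteq> X - (\<Union>j\<in>{1..<i}. Zs j)"
    and greedy_Xs_max_cluster: "max_cluster_in rho r (X - (\<Union>j\<in>{1..<i}. Zs j)) (Xs i)"
  using assms unfolding greedy_cluster_partition_def Let_def by fastforce+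

lemma greedy_Zs_disjoint:
  assumes "greedy_cluster_partition X rho r n Xs Zs"
    and "i \<in> {1..n}" and "j \<in> {1..n}" and "i \<noteq> j"
  shows "Zs i \<inter> Zs j = {}"
proof (cases "i < j")
  case True
  with greedy_Zs_subset_remainder[OF assms(1,3)] assms(2) show ?thesis by auto
next
  case False
  with assms(4) have "j < i" by simp
  with greedy_Zs_subset_remainder[OF assms(1,2)] assms(3) show ?thesis by auto
qed

lemma greedy_large_Zs_far_bound:
  assumes "semimetric_on X rho" and "finite X"
    and greedy: "greedy_cluster_partition X rho r n Xs Zs"
    and I: "I \<subseteq> {i\<in>{1..n}. (k + 1) * card (Xs i) \<le> card (Zs i)}"
    and "set xs \<subseteq> X" and "length xs = k"
  shows "(\<Sum>i\<in>I. card (Zs i)) \<le> (k + 1) * card (far_points (\<Union>i\<in>I. Zs i) rho r xs)"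
proof -
  have ZsX: "Zs i \<subseteq> X" if "i \<in> I" for i
    using greedy_Zs_subset_remainder[OF greedy] I that by blast
  have finZs: "finite (Zs i)" if "i \<in> I" for i
    using ZsX[OF that] assms(2) by (rule finite_subset)
  have finI: "finite I"
    using I by (rule finite_subset) simp
  have per_cluster: "card (Zs i) \<le> (k + 1) * card (far_points (Zs i) rho r xs)" if i: "i \<in> I" for i
  proof -
    have i1: "i \<in> {1..n}" using I i by blast
    have "card {z\<in>Zs i. rho x z \<le> r} \<le> card (Xs i)" if "x \<in> set xs" for x
      using card_ball_le_max_cluster[OF assms(1) _ greedy_Zs_subset_remainder[OF greedy i1]
          _ greedy_Xs_max_cluster[OF greedy i1]] that assms(5) by blast
    moreover have "card (set xs) \<le> k"
      using assms(6) card_length by blast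
    ultimately have "card (Zs i) \<le> (k + 1) * card {z\<in>Zs i. \<forall>x\<in>set xs. \<not> rho x z \<le> r}"
      using I i by (intro card_le_Suc_mult_card_far finZs) auto
    then show ?thesis by (simp add: far_points_def not_le)
  qed
  have "(\<Sum>i\<in>I. card (Zs i)) \<le> (\<Sum>i\<in>I. (k + 1) * card (far_points (Zs i) rho r xs))"
    using per_cluster by (rule sum_mono)
  also have "\<dots> = (k + 1) * card (\<Union>i\<in>I. far_points (Zs i) rho r xs)"
    using finI finZs greedy_Zs_disjoint[OF greedy] I
    by (subst card_UN_disjoint) (auto simp: far_points_def sum_distrib_left)
  also have "(\<Union>i\<in>I. far_points (Zs i) rho r xs) = far_points (\<Union>i\<in>I. Zs i) rho r xs"
    by (auto simp: far_points_def)
  finally show ?thesis .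
qed

lemma bound_from_tuple_counts:
  fixes a b c s N \<alpha> \<beta> :: real
  assumes "\<alpha> > 0" and "N > 0" and "s \<ge> 0" and "c \<ge> 0"
    and "\<alpha> * N ^ k \<le> a" and "b \<le> \<beta> * N ^ (k + 1)" and "a * s \<le> c * b"
  shows "s \<le> c * \<beta> / \<alpha> * N"
proof -
  have "\<alpha> * s * N ^ k = (\<alpha> * N ^ k) * s"
    by (simp only: mult_ac)
  also have "\<dots> \<le> a * s"
    using assms(5,3) by (rule mult_right_mono)
  also have "\<dots> \<le> c * b"
    by (rule assms(7))
  also have "\<dots> \<le> c * (\<beta> * N ^ (k + 1))"
    using assms(6,4) by (rule mult_left_mono)
  also have "\<dots> = c * \<beta> * N * N ^ k"
    by (simp add: algebra_simps)
  finally have "\<alpha> * s * N ^ k \<le> c * \<beta> * N * N ^ k" .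
  then have "\<alpha> * s \<le> c * \<beta> * N"
    using assms(2) by simp
  with assms(1) show ?thesis
    by (simp add: field_simps)
qed

theorem mainTheorem2:
  fixes X :: "'a set" and rho :: "'a \<Rightarrow> 'a \<Rightarrow> real"
    and r \<alpha> \<beta> :: real and k n :: nat and Xs Zs :: "nat \<Rightarrow> 'a set"
  assumes "k \<ge> 1" and "r > 0" and "\<alpha> > 0" and "\<beta> > 0"
    and "finite X" and "semimetric_on X rho"
    and "T_count X rho r (k + 1) \<le> \<beta> * real (card X) ^ (k + 1) / fact (k + 1)"
    and "T_count X rho r k \<ge> \<alpha> * real (card X) ^ k / fact k"
    and "greedy_cluster_partition X rho r n Xs Zs"
  shows "(\<Sum>i\<in>{i\<in>{1..n}. (k + 1) * card (Xs i) \<le> card (Zs i)}. real (card (Zs i)))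
           \<le> real (k + 1) * \<beta> / \<alpha> * real (card X)"
proof -
  define I where "I = {i\<in>{1..n}. (k + 1) * card (Xs i) \<le> card (Zs i)}"
  define s where "s = (\<Sum>i\<in>I. card (Zs i))"
  have lhs_eq: "(\<Sum>i\<in>I. real (card (Zs i))) = real s"
    by (simp add: s_def)
  have ZsX: "(\<Union>i\<in>I. Zs i) \<subseteq> X"
    using greedy_Zs_subset_remainder[OF assms(9)] by (auto simp: I_def)
  have "card (separated_tuples X rho r k) * s \<le> (k + 1) * card (separated_tuples X rho r (Suc k))"
    using assms(5) ZsX unfolding s_def
    by (rule card_separated_tuples_mult_le)
       (intro greedy_large_Zs_far_bound[OF assms(6,5,9)], auto simp: I_def separated_tuples_def)
  then have counts: "real (card (separated_tuples X rho r k)) * real s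
                       \<le> real (k + 1) * real (card (separated_tuples X rho r (k + 1)))"
    by (metis Suc_eq_plus1 of_nat_le_iff of_nat_mult)
  show ?thesis
  proof (cases "card X = 0")
    case True
    with assms(5) ZsX have "s = 0" by (auto simp: s_def I_def)
    with True lhs_eq show ?thesis by (simp add: I_def)
  next
    case False
    have "real s \<le> real (k + 1) * \<beta> / \<alpha> * real (card X)"
      using assms(3,7,8) False counts
      by (intro bound_from_tuple_counts[where a = "real (card (separated_tuples X rho r k))"
            and b = "real (card (separated_tuples X rho r (k + 1)))" and k = k])
         (simp_all add: T_count_eq_card_separated_tuples divide_le_cancel)
    with lhs_eq show ?thesis by (simp add: I_def)
  qed
qed

end
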